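(* Let $G=(V,E)$ be a finite simple graph of order $n$ and let $T=n-1$. If $(x,y,z)$ is an optimal solution of the integer program with the constraints of the Time Step Model $\mathrm{TSM}(G,T)$ and objective "minimize $\sum_{v\in V}x^0_v+\frac{1}{2T}\sum_{t\in[T]}z^t$", then $C=\{v\in V\colon x^0_v=1\}$ is a minimum zero forcing set of $G$ with $\mathrm{pt}(G)=\mathrm{pt}(G,C)=\sum_{t\in[T]}z^t$.
   Context: Zero forcing: under the standard color change rule a filled vertex $u$ can force a non-filled vertex $v$ if $v$ is the only non-filled neighbor of $u$; $C\subseteq V$ is a zero forcing set if, starting with $C$ filled and repeatedly forcing, all of $V$ becomes filled; a minimum zero forcing set is one of minimum size. The propagation time $\mathrm{pt}(G,C)$ is the smallest $t^*$ such that, starting from $C^{[0]}=C$ and setting $C^{[t]}=C^{[t-1]}\cup\{v\notin C^{[t-1]}\colon$ some $u\in C^{[t-1]}$ has $v$ as its only neighbor outside $C^{[t-1]}\}$, one has $C^{[t^*]}=V$ ($\infty$ if $C$ is not a zero forcing set). $\mathrm{pt}(G)=\min\{\mathrm{pt}(G,C)\colon C$ a minimum zero forcing set$\}$. $N(u)$ is the neighborhood of $u$ and $d(u)=|N(u)|$. Time Step Model constraints: $A$ is the set of arcs containing $(u,v)$ and $(v,u)$ for each edge $\{u,v\}$, $[T]=\{1,\dots,T\}$. Binary variables $x^t_v$ ($v\in V$, $t\in\{0,\dots,T\}$), $y^t_a$ ($a\in A$, $t\in[T]$), $z^t$ ($t\in[T]$), with constraints: (1) $x^0_v+\sum_{t\in[T]}\sum_{a=(u,v)\in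 A}y^t_a=1$ for all $v$; (2) $y^t_a\leq x^{t-1}_u$ for all $a=(u,v)\in A$, $t\in[T]$; (3) $y^t_a\leq x^{t-1}_w$ for all $a=(u,v)\in A$, $w\in N(u)\setminus\{v\}$, $t\in[T]$; (4) $x^t_v=x^{t-1}_v+\sum_{a=(u,v)\in A}y^t_a$ for all $v$, $t\in[T]$; (5) $x^{t-1}_u-x^{t-1}_v+\sum_{w\in N(u)\setminus\{v\}}x^{t-1}_w\leq\sum_{a=(w,v)\in A}y^t_a+d(u)-1$ for all $(u,v)\in A$, $t\in[T]$; (6) $\frac1n\sum_{v\in V}(x^t_v-x^{t-1}_v)-z^t\leq0$ for all $t\in[T]$; (7) $z^t-\sum_{v\in V}(x^t_v-x^{t-1}_v)\leq 0$ for all $t\in[T]$. *)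

theory Defs
  imports Main "HOL-Library.Extended_Nat"
begin

definition simple_graph :: "'a set \<Rightarrow> ('a \<Rightarrow> 'a \<Rightarrow> bool) \<Rightarrow> bool" where
  "simple_graph V E \<longleftrightarrow> finite V \<and> (\<forall>u v. E u v \<longrightarrow> u \<in> V \<and> v \<in> V)
     \<and> (\<forall>u v. E u v \<longrightarrow> E v u) \<and> (\<forall>u. \<not> E u u)"

definition nbhd :: "'a set \<Rightarrow> ('a \<Rightarrow> 'a \<Rightarrow> bool) \<Rightarrow> 'a \<Rightarrow> 'a set" where
  "nbhd V E u = {w \<in> V. E u w}"

definition deg :: "'a set \<Rightarrow> ('a \<Rightarrow> 'a \<Rightarrow> bool) \<Rightarrow> 'a \<Rightarrow> nat" where
  "deg V E u = card (nbhd V E u)"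

definition force_step :: "'a set \<Rightarrow> ('a \<Rightarrow> 'a \<Rightarrow> bool) \<Rightarrow> 'a set \<Rightarrow> 'a set" where
  "force_step V E C = C \<union> {v \<in> V - C. \<exists>u\<in>C. nbhd V E u - C = {v}}"

definition filled_at :: "'a set \<Rightarrow> ('a \<Rightarrow> 'a \<Rightarrow> bool) \<Rightarrow> 'a set \<Rightarrow> nat \<Rightarrow> 'a set" where
  "filled_at V E C t = (force_step V E ^^ t) C"

definition zero_forcing_set :: "'a set \<Rightarrow> ('a \<Rightarrow> 'a \<Rightarrow> bool) \<Rightarrow> 'a set \<Rightarrow> bool" where
  "zero_forcing_set V E C \<longleftrightarrow> C \<subseteq> V \<and> (\<exists>t. filled_at V E C t = V)"

definition min_zero_forcing_set :: "'a set \<Rightarrow> ('a \<Rightarrow> 'a \<Rightarrow> bool) \<Rightarrow> 'a set \<Rightarrow> bool" where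
  "min_zero_forcing_set V E C \<longleftrightarrow> zero_forcing_set V E C \<and>
     (\<forall>D. zero_forcing_set V E D \<longrightarrow> card C \<le> card D)"

definition pt_set :: "'a set \<Rightarrow> ('a \<Rightarrow> 'a \<Rightarrow> bool) \<Rightarrow> 'a set \<Rightarrow> enat" where
  "pt_set V E C = (if zero_forcing_set V E C
      then enat (LEAST t. filled_at V E C t = V) else \<infinity>)"

definition pt_graph :: "'a set \<Rightarrow> ('a \<Rightarrow> 'a \<Rightarrow> bool) \<Rightarrow> enat" where
  "pt_graph V E = Min (pt_set V E ` {C. min_zero_forcing_set V E C})"

definition tsm_feasible :: "'a set \<Rightarrow> ('a \<Rightarrow> 'a \<Rightarrow> bool) \<Rightarrow> nat \<Rightarrow>
    ('a \<Rightarrow> nat \<Rightarrow> real) \<Rightarrow> ('a \<times> 'a \<Rightarrow> nat \<Rightarrow> real) \<Rightarrow> (nat \<Rightarrow> real) \<Rightarrow> bool" where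
  "tsm_feasible V E T x y z \<longleftrightarrow>
     (\<forall>v\<in>V. \<forall>t\<in>{0..T}. x v t \<in> {0,1}) \<and>
     (\<forall>u v. E u v \<longrightarrow> (\<forall>t\<in>{1..T}. y (u,v) t \<in> {0,1})) \<and>
     (\<forall>t\<in>{1..T}. z t \<in> {0,1}) \<and>
     \<comment> \<open>(1)\<close>
     (\<forall>v\<in>V. x v 0 + (\<Sum>t\<in>{1..T}. \<Sum>u\<in>nbhd V E v. y (u,v) t) = 1) \<and>
     \<comment> \<open>(2)\<close>
     (\<forall>u v. E u v \<longrightarrow> (\<forall>t\<in>{1..T}. y (u,v) t \<le> x u (t-1))) \<and>
     \<comment> \<open>(3)\<close>
     (\<forall>u v. E u v \<longrightarrow> (\<forall>w\<in>nbhd V E u - {v}. \<forall>t\<in>{1..T}. y (u,v) t \<le> x w (t-1))) \<and>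
     \<comment> \<open>(4)\<close>
     (\<forall>v\<in>V. \<forall>t\<in>{1..T}. x v t = x v (t-1) + (\<Sum>u\<in>nbhd V E v. y (u,v) t)) \<and>
     \<comment> \<open>(5)\<close>
     (\<forall>u v. E u v \<longrightarrow> (\<forall>t\<in>{1..T}.
        x u (t-1) - x v (t-1) + (\<Sum>w\<in>nbhd V E u - {v}. x w (t-1))
          \<le> (\<Sum>w\<in>nbhd V E v. y (w,v) t) + real (deg V E u) - 1)) \<and>
     \<comment> \<open>(6)\<close>
     (\<forall>t\<in>{1..T}. (1 / real (card V)) * (\<Sum>v\<in>V. x v t - x v (t-1)) - z t \<le> 0) \<and>
     \<comment> \<open>(7)\<close>
     (\<forall>t\<in>{1..T}. z t - (\<Sum>v\<in>V. x v t - x v (t-1)) \<le> 0)"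

definition tsm_objective :: "'a set \<Rightarrow> nat \<Rightarrow> ('a \<Rightarrow> nat \<Rightarrow> real) \<Rightarrow> (nat \<Rightarrow> real) \<Rightarrow> real" where
  "tsm_objective V T x z = (\<Sum>v\<in>V. x v 0) + (1 / (2 * real T)) * (\<Sum>t\<in>{1..T}. z t)"

definition tsm_optimal :: "'a set \<Rightarrow> ('a \<Rightarrow> 'a \<Rightarrow> bool) \<Rightarrow> nat \<Rightarrow>
    ('a \<Rightarrow> nat \<Rightarrow> real) \<Rightarrow> ('a \<times> 'a \<Rightarrow> nat \<Rightarrow> real) \<Rightarrow> (nat \<Rightarrow> real) \<Rightarrow> bool" where
  "tsm_optimal V E T x y z \<longleftrightarrow> tsm_feasible V E T x y z \<and>
     (\<forall>x' y' z'. tsm_feasible V E T x' y' z' \<longrightarrow> tsm_objective V T x z \<le> tsm_objective V T x' z')"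

end

theory Submission
  imports Defs
begin

text \<open>A feasible solution of TSM(G,T) encodes the propagation from C = {v. x_v^0 = 1}:
  constraints (2)-(5) make the sets {v. x_v^t = 1} exactly the sets C^[t], constraint (1)
  makes them reach V by time T, and (6)-(7) make z^t the indicator of C^[t] \<noteq> C^[t-1], so
  the z^t sum to pt(G,C). Conversely every zero forcing set D, whose propagation time is at
  most n - 1 = T, yields a feasible solution of objective |D| + pt(G,D)/(2T). The second
  summand lies in [0, 1/2], so an optimal solution minimises first |C| and then pt(G,C).\<close>

section \<open>Propagation\<close>

lemma subset_force_step: "A \<subseteq> force_step V E A"
  by (auto simp: force_step_def)

lemma force_step_subset: "A \<subseteq> V \<Longrightarrow> force_step V E A \<subseteq> V"
  by (auto simp: force_step_def)

lemma force_step_empty [simp]: "force_step V E {} = {}"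
  by (auto simp: force_step_def)

lemma force_step_top [simp]: "force_step V E V = V"
  by (auto simp: force_step_def)

lemma filled_at_0 [simp]: "filled_at V E C 0 = C"
  by (simp add: filled_at_def)

lemma filled_at_Suc: "filled_at V E C (Suc t) = force_step V E (filled_at V E C t)"
  by (simp add: filled_at_def)

lemma filled_at_subset: "C \<subseteq> V \<Longrightarrow> filled_at V E C t \<subseteq> V"
  by (induction t) (auto simp: filled_at_Suc dest: force_step_subset)

lemma filled_at_empty [simp]: "filled_at V E {} t = {}"
  by (induction t) (simp_all add: filled_at_Suc)

lemma filled_at_mono: "s \<le> t \<Longrightarrow> filled_at V E C s \<subseteq> filled_at V E C t"
proof (induction t rule: dec_induct)
  case (step n)
  then show ?case
    using subset_force_step[of "filled_at V E C n" V E] by (auto simp: filled_at_Suc)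
qed simp

lemma filled_at_stationary:
  assumes "filled_at V E C (Suc t) = filled_at V E C t" and "t \<le> s"
  shows "filled_at V E C s = filled_at V E C t"
  using assms(2)
proof (induction s rule: dec_induct)
  case (step n)
  then show ?case
    using assms(1) by (simp add: filled_at_Suc)
qed simp

lemma filled_at_eq_top_mono:
  "filled_at V E C t = V \<Longrightarrow> t \<le> s \<Longrightarrow> filled_at V E C s = V"
  using filled_at_stationary[of V E C t s] by (simp add: filled_at_Suc)

definition propagation_time :: "'a set \<Rightarrow> ('a \<Rightarrow> 'a \<Rightarrow> bool) \<Rightarrow> 'a set \<Rightarrow> nat" where
  "propagation_time V E C = (LEAST t. filled_at V E C t = V)"

lemma pt_set_eq_propagation_time:
  "zero_forcing_set V E C \<Longrightarrow> pt_set V E C = enat (propagation_time V E C)"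
  by (simp add: pt_set_def propagation_time_def)

lemma filled_at_propagation_time:
  "zero_forcing_set V E C \<Longrightarrow> filled_at V E C (propagation_time V E C) = V"
  unfolding zero_forcing_set_def propagation_time_def by (metis (mono_tags) LeastI_ex)

lemma propagation_time_le: "filled_at V E C t = V \<Longrightarrow> propagation_time V E C \<le> t"
  unfolding propagation_time_def by (rule Least_le)

lemma zero_forcing_setI: "C \<subseteq> V \<Longrightarrow> filled_at V E C t = V \<Longrightarrow> zero_forcing_set V E C"
  unfolding zero_forcing_set_def by blast

lemma filled_at_psubset_Suc:
  assumes "zero_forcing_set V E C" and "t < propagation_time V E C"
  shows "filled_at V E C t \<subset> filled_at V E C (Suc t)"
proof -
  have "filled_at V E C t \<noteq> V"
    using assms(2) propagation_time_le[of V E C t] by auto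
  moreover have "filled_at V E C (Suc t) \<noteq> filled_at V E C t"
  proof
    assume "filled_at V E C (Suc t) = filled_at V E C t"
    then have "filled_at V E C (propagation_time V E C) = filled_at V E C t"
      using filled_at_stationary assms(2) less_imp_le by blast
    then show False
      using filled_at_propagation_time[OF assms(1)] \<open>filled_at V E C t \<noteq> V\<close> by simp
  qed
  ultimately show ?thesis
    using filled_at_mono[of t "Suc t" V E C] by auto
qed

lemma filled_at_changes_iff:
  assumes "zero_forcing_set V E C" and "0 < t"
  shows "filled_at V E C t \<noteq> filled_at V E C (t - 1) \<longleftrightarrow> t \<le> propagation_time V E C"
proof (cases "t \<le> propagation_time V E C")
  case True
  obtain s where "t = Suc s"
    using assms(2) gr0_implies_Suc by blast
  then show ?thesis
    using True filled_at_psubset_Suc[OF assms(1), of s] by auto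
next
  case False
  then show ?thesis
    using filled_at_eq_top_mono[OF filled_at_propagation_time[OF assms(1)], of "t - 1"]
      filled_at_eq_top_mono[OF filled_at_propagation_time[OF assms(1)], of t] by simp
qed

lemma card_changes_eq_propagation_time:
  assumes "zero_forcing_set V E C" and "propagation_time V E C \<le> T"
  shows "card {t \<in> {1..T}. filled_at V E C t \<noteq> filled_at V E C (t - 1)} = propagation_time V E C"
proof -
  have "{t \<in> {1..T}. filled_at V E C t \<noteq> filled_at V E C (t - 1)}
      = {t \<in> {1..T}. t \<le> propagation_time V E C}"
    using filled_at_changes_iff[OF assms(1)] by (intro Collect_cong conj_cong refl) auto
  also have "\<dots> = {1..propagation_time V E C}"
    using assms(2) by auto
  finally show ?thesis by simp
qed

lemma card_filled_at_ge:
  assumes "zero_forcing_set V E C" and "finite V" and "t \<le> propagation_time V E C"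
  shows "card C + t \<le> card (filled_at V E C t)"
  using assms(3)
proof (induction t)
  case (Suc t)
  have "filled_at V E C (Suc t) \<subseteq> V"
    using assms(1) filled_at_subset[of C V E "Suc t"] by (simp add: zero_forcing_set_def)
  then have "card (filled_at V E C t) < card (filled_at V E C (Suc t))"
    using filled_at_psubset_Suc[OF assms(1)] Suc.prems assms(2)
    by (meson Suc_le_lessD psubset_card_mono rev_finite_subset)
  then show ?case using Suc by simp
qed simp

text \<open>A nonempty graph needs a nonempty zero forcing set, and every round before the
  propagation time fills at least one vertex.\<close>
lemma propagation_time_le_card:
  assumes "zero_forcing_set V E C" and "finite V"
  shows "propagation_time V E C \<le> card V - 1"
proof (cases "C = {}")
  case True
  then have "V = {}"
    using filled_at_propagation_time[OF assms(1)] by simp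
  then show ?thesis
    using True propagation_time_le[of V E C 0] by simp
next
  case False
  then have "1 \<le> card C"
    using assms by (meson card_0_eq finite_subset less_one not_le zero_forcing_set_def)
  moreover have "card (filled_at V E C (propagation_time V E C)) \<le> card V"
    using filled_at_propagation_time[OF assms(1)] by simp
  ultimately show ?thesis
    using card_filled_at_ge[OF assms, of "propagation_time V E C"] by simp
qed

section \<open>Feasible solutions encode propagation\<close>

lemma simple_graph_finite: "simple_graph V E \<Longrightarrow> finite V"
  by (simp add: simple_graph_def)

lemma mem_nbhd_iff: "simple_graph V E \<Longrightarrow> w \<in> nbhd V E u \<longleftrightarrow> E u w"
  by (auto simp: simple_graph_def nbhd_def)

lemma nbhd_subset: "nbhd V E u \<subseteq> V"
  by (auto simp: nbhd_def)

lemma finite_nbhd: "finite V \<Longrightarrow> finite (nbhd V E u)"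
  by (simp add: nbhd_def)

lemma deg_eq_Suc_card_nbhd_Diff:
  "finite V \<Longrightarrow> v \<in> nbhd V E u \<Longrightarrow> deg V E u = Suc (card (nbhd V E u - {v}))"
  unfolding deg_def by (metis card_Suc_Diff1 finite_nbhd)

locale tsm_solution =
  fixes V :: "'a set" and E :: "'a \<Rightarrow> 'a \<Rightarrow> bool" and T :: nat
    and x :: "'a \<Rightarrow> nat \<Rightarrow> real" and y :: "'a \<times> 'a \<Rightarrow> nat \<Rightarrow> real" and z :: "nat \<Rightarrow> real"
  assumes graph: "simple_graph V E"
    and feasible: "tsm_feasible V E T x y z"
begin

lemma finite_V: "finite V"
  using graph by (rule simple_graph_finite)

lemma E_sym: "E u v \<Longrightarrow> E v u"
  using graph by (simp add: simple_graph_def)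

lemma x_binary: "v \<in> V \<Longrightarrow> t \<le> T \<Longrightarrow> x v t = 0 \<or> x v t = 1"
  using feasible by (auto simp: tsm_feasible_def)

lemma y_binary: "E u v \<Longrightarrow> t \<in> {1..T} \<Longrightarrow> y (u, v) t = 0 \<or> y (u, v) t = 1"
  using feasible by (auto simp: tsm_feasible_def)

lemma z_binary: "t \<in> {1..T} \<Longrightarrow> z t = 0 \<or> z t = 1"
  using feasible by (auto simp: tsm_feasible_def)

definition inflow :: "'a \<Rightarrow> nat \<Rightarrow> real" where
  "inflow v t = (\<Sum>u\<in>nbhd V E v. y (u, v) t)"

lemma initially_filled_or_forced_once: "v \<in> V \<Longrightarrow> x v 0 + (\<Sum>t\<in>{1..T}. inflow v t) = 1"
  using feasible by (simp add: tsm_feasible_def inflow_def)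

lemma y_le_x_tail: "E u v \<Longrightarrow> t \<in> {1..T} \<Longrightarrow> y (u, v) t \<le> x u (t - 1)"
  using feasible by (simp add: tsm_feasible_def)

lemma y_le_x_other_nbr:
  "E u v \<Longrightarrow> w \<in> nbhd V E u - {v} \<Longrightarrow> t \<in> {1..T} \<Longrightarrow> y (u, v) t \<le> x w (t - 1)"
  using feasible unfolding tsm_feasible_def by blast

lemma x_step: "v \<in> V \<Longrightarrow> t \<in> {1..T} \<Longrightarrow> x v t = x v (t - 1) + inflow v t"
  using feasible by (simp add: tsm_feasible_def inflow_def)

lemma color_change_bound:
  "E u v \<Longrightarrow> t \<in> {1..T} \<Longrightarrow>
    x u (t - 1) - x v (t - 1) + (\<Sum>w\<in>nbhd V E u - {v}. x w (t - 1))
      \<le> inflow v t + real (deg V E u) - 1"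
  using feasible by (simp add: tsm_feasible_def inflow_def)

lemma z_lower: "t \<in> {1..T} \<Longrightarrow> (1 / real (card V)) * (\<Sum>v\<in>V. x v t - x v (t - 1)) \<le> z t"
  using feasible unfolding tsm_feasible_def by fastforce

lemma z_upper: "t \<in> {1..T} \<Longrightarrow> z t \<le> (\<Sum>v\<in>V. x v t - x v (t - 1))"
  using feasible unfolding tsm_feasible_def by fastforce

lemma inflow_nonneg: "t \<in> {1..T} \<Longrightarrow> 0 \<le> inflow v t"
  unfolding inflow_def
proof (rule sum_nonneg)
  fix u assume "t \<in> {1..T}" "u \<in> nbhd V E v"
  then show "0 \<le> y (u, v) t"
    using y_binary[of u v t] E_sym mem_nbhd_iff[OF graph] by fastforce
qed

lemma x_eq_x_0_plus_inflow: "t \<le> T \<Longrightarrow> v \<in> V \<Longrightarrow> x v t = x v 0 + (\<Sum>s\<in>{1..t}. inflow v s)"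
proof (induction t)
  case (Suc t)
  then show ?case
    using x_step[of v "Suc t"] by simp
qed simp

lemma x_T: "v \<in> V \<Longrightarrow> x v T = 1"
  using x_eq_x_0_plus_inflow[of T v] initially_filled_or_forced_once[of v] by simp

definition filled :: "nat \<Rightarrow> 'a set" where
  "filled t = {v \<in> V. x v t = 1}"

lemma filled_subset: "filled t \<subseteq> V"
  by (auto simp: filled_def)

lemma x_eq_of_bool: "v \<in> V \<Longrightarrow> t \<le> T \<Longrightarrow> x v t = of_bool (v \<in> filled t)"
  using x_binary[of v t] by (auto simp: filled_def)

lemma mem_filledI: "v \<in> V \<Longrightarrow> t \<le> T \<Longrightarrow> 1 \<le> x v t \<Longrightarrow> v \<in> filled t"
  using x_binary[of v t] by (auto simp: filled_def)

lemma filled_mono: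
  assumes t: "t \<in> {1..T}"
  shows "filled (t - 1) \<subseteq> filled t"
proof
  fix v assume "v \<in> filled (t - 1)"
  then have v: "v \<in> V" "x v (t - 1) = 1"
    by (auto simp: filled_def)
  then have "1 \<le> x v t"
    using x_step[OF v(1) t] inflow_nonneg[OF t, of v] by simp
  then show "v \<in> filled t"
    using mem_filledI v(1) t by simp
qed

lemma active_arc_into:
  assumes t: "t \<in> {1..T}" and "inflow v t \<noteq> 0"
  obtains u where "E u v" and "y (u, v) t = 1"
proof -
  obtain u where u: "u \<in> nbhd V E v" "y (u, v) t \<noteq> 0"
    using assms(2) unfolding inflow_def by (rule sum.not_neutral_contains_not_neutral)
  have "E v u"
    using u(1) mem_nbhd_iff[OF graph] by blast
  then have "E u v"
    by (rule E_sym)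
  then show ?thesis
    using that y_binary[OF _ t] u(2) by blast
qed

lemma forced_vertex_has_forcer:
  assumes t: "t \<in> {1..T}" and v: "v \<in> filled t" "v \<notin> filled (t - 1)"
  shows "\<exists>u\<in>filled (t - 1). nbhd V E u - filled (t - 1) = {v}"
proof -
  have vV: "v \<in> V" and "t - 1 \<le> T" "t \<le> T"
    using v(1) filled_subset t by auto
  then have "x v t = 1" "x v (t - 1) = 0"
    using x_eq_of_bool[OF vV] v by simp_all
  then have "inflow v t \<noteq> 0"
    using x_step[OF vV t] by simp
  then obtain u where Euv: "E u v" and y1: "y (u, v) t = 1"
    using active_arc_into[OF t] by blast
  have "v \<in> nbhd V E u"
    using Euv mem_nbhd_iff[OF graph] by blast
  have "u \<in> nbhd V E v"
    using E_sym[OF Euv] mem_nbhd_iff[OF graph] by blast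
  then have "u \<in> filled (t - 1)"
    using mem_filledI[OF _ \<open>t - 1 \<le> T\<close>] y_le_x_tail[OF Euv t] y1 nbhd_subset[of V E v]
    by auto
  moreover have "w \<in> filled (t - 1)" if "w \<in> nbhd V E u - {v}" for w
    using mem_filledI[OF _ \<open>t - 1 \<le> T\<close>] y_le_x_other_nbr[OF Euv that t] y1 that
      nbhd_subset[of V E u] by auto
  ultimately show ?thesis
    using \<open>v \<in> nbhd V E u\<close> v(2) by blast
qed

lemma filled_subset_force_step:
  assumes t: "t \<in> {1..T}"
  shows "filled t \<subseteq> force_step V E (filled (t - 1))"
  unfolding force_step_def using forced_vertex_has_forcer[OF t] filled_subset[of t] by blast

text \<open>If u is filled and v is its only unfilled neighbour, the left side of constraint (5)
  is d(u), so some arc enters v.\<close>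
lemma force_step_subset_filled:
  assumes t: "t \<in> {1..T}"
  shows "force_step V E (filled (t - 1)) \<subseteq> filled t"
proof
  fix v assume "v \<in> force_step V E (filled (t - 1))"
  then consider "v \<in> filled (t - 1)"
    | u where "v \<in> V" "v \<notin> filled (t - 1)" "u \<in> filled (t - 1)"
        "nbhd V E u - filled (t - 1) = {v}"
    unfolding force_step_def by blast
  then show "v \<in> filled t"
  proof cases
    case 1
    then show ?thesis using filled_mono[OF t] by blast
  next
    case (2 u)
    have "t - 1 \<le> T" "t \<le> T" using t by auto
    have vN: "v \<in> nbhd V E u"
      using 2(4) by blast
    then have Euv: "E u v"
      using mem_nbhd_iff[OF graph] by blast
    have uV: "u \<in> V" using 2(3) filled_subset by blast
    have "x w (t - 1) = 1" if "w \<in> nbhd V E u - {v}" for w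
    proof -
      have "w \<in> filled (t - 1)"
        using that 2(4) by blast
      then show ?thesis by (simp add: filled_def)
    qed
    then have "(\<Sum>w\<in>nbhd V E u - {v}. x w (t - 1)) = (\<Sum>w\<in>nbhd V E u - {v}. 1)"
      by (intro sum.cong refl)
    then have "(\<Sum>w\<in>nbhd V E u - {v}. x w (t - 1)) = real (deg V E u) - 1"
      using deg_eq_Suc_card_nbhd_Diff[OF finite_V vN] by simp
    moreover have "x u (t - 1) = 1" "x v (t - 1) = 0"
      using x_eq_of_bool[OF uV \<open>t - 1 \<le> T\<close>] x_eq_of_bool[OF 2(1) \<open>t - 1 \<le> T\<close>] 2 by simp_all
    ultimately have "1 \<le> inflow v t"
      using color_change_bound[OF Euv t] by simp
    then show ?thesis
      using mem_filledI[OF 2(1) \<open>t \<le> T\<close>] x_step[OF 2(1) t] \<open>x v (t - 1) = 0\<close> by simp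
  qed
qed

lemma filled_eq_filled_at: "t \<le> T \<Longrightarrow> filled t = filled_at V E (filled 0) t"
proof (induction t)
  case (Suc t)
  have "Suc t \<in> {1..T}"
    using Suc.prems by simp
  then have "filled (Suc t) = force_step V E (filled t)"
    using filled_subset_force_step force_step_subset_filled by fastforce
  then show ?case
    using Suc by (simp add: filled_at_Suc)
qed simp

lemma filled_T: "filled T = V"
  using x_T by (auto simp: filled_def)

lemma zero_forcing_set_filled_0: "zero_forcing_set V E (filled 0)"
  using filled_subset filled_T filled_eq_filled_at[of T]
  by (intro zero_forcing_setI[of _ _ _ T]) simp_all

lemma propagation_time_le_T: "propagation_time V E (filled 0) \<le> T"
  using filled_T filled_eq_filled_at[of T] by (simp add: propagation_time_le)

lemma sum_x_increase:
  assumes t: "t \<in> {1..T}"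
  shows "(\<Sum>v\<in>V. x v t - x v (t - 1)) = real (card (filled t - filled (t - 1)))"
proof -
  have "(\<Sum>v\<in>V. x v t - x v (t - 1)) = (\<Sum>v\<in>V. of_bool (v \<in> filled t - filled (t - 1)))"
    using x_eq_of_bool filled_mono[OF t] t by (intro sum.cong) auto
  also have "\<dots> = real (card (V \<inter> {v. v \<in> filled t - filled (t - 1)}))"
    using finite_V by simp
  also have "V \<inter> {v. v \<in> filled t - filled (t - 1)} = filled t - filled (t - 1)"
    using filled_subset[of t] by blast
  finally show ?thesis .
qed

text \<open>Constraints (6) and (7) squeeze the binary z t between the number of vertices filled
  in round t and that number divided by n.\<close>
lemma z_eq:
  assumes t: "t \<in> {1..T}"
  shows "z t = of_bool (filled t \<noteq> filled (t - 1))"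
proof (cases "filled t = filled (t - 1)")
  case True
  then have "z t \<le> 0"
    using z_upper[OF t] sum_x_increase[OF t] by simp
  then show ?thesis
    using z_binary[OF t] True by auto
next
  case False
  then have "filled t - filled (t - 1) \<noteq> {}"
    using filled_mono[OF t] by blast
  then have "0 < card (filled t - filled (t - 1))" and "0 < card V"
    using finite_V filled_subset[of t] card_mono[OF finite_V, of "filled t - filled (t - 1)"]
    by (auto simp: card_gt_0_iff finite_subset)
  then have "0 < 1 / real (card V) * (\<Sum>v\<in>V. x v t - x v (t - 1))"
    using sum_x_increase[OF t] by simp
  then have "0 < z t"
    using z_lower[OF t] by linarith
  then show ?thesis
    using z_binary[OF t] False by auto
qed

lemma sum_z: "(\<Sum>t\<in>{1..T}. z t) = real (propagation_time V E (filled 0))"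
proof -
  let ?F = "filled_at V E (filled 0)"
  have "z t = of_bool (?F t \<noteq> ?F (t - 1))" if t: "t \<in> {1..T}" for t
  proof -
    have "t \<le> T" "t - 1 \<le> T"
      using t by auto
    then show ?thesis
      using z_eq[OF t] filled_eq_filled_at[of t] filled_eq_filled_at[of "t - 1"] by simp
  qed
  then have "(\<Sum>t\<in>{1..T}. z t) = (\<Sum>t\<in>{1..T}. of_bool (?F t \<noteq> ?F (t - 1)))"
    by (rule sum.cong[OF refl])
  also have "\<dots> = real (card ({1..T} \<inter> {t. ?F t \<noteq> ?F (t - 1)}))"
    by simp
  also have "\<dots> = real (propagation_time V E (filled 0))"
    using card_changes_eq_propagation_time[OF zero_forcing_set_filled_0 propagation_time_le_T]
    by (simp add: Int_def)
  finally show ?thesis .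
qed

lemma sum_x_0: "(\<Sum>v\<in>V. x v 0) = real (card (filled 0))"
  using finite_V filled_subset[of 0] x_eq_of_bool[of _ 0]
  by (simp add: Int_absorb1 Collect_mem_eq)

lemma objective_eq:
  "tsm_objective V T x z
     = real (card (filled 0)) + 1 / (2 * real T) * real (propagation_time V E (filled 0))"
  unfolding tsm_objective_def sum_x_0 sum_z ..

end

section \<open>The schedule of a zero forcing set\<close>

locale forcing_schedule =
  fixes V :: "'a set" and E :: "'a \<Rightarrow> 'a \<Rightarrow> bool" and C :: "'a set" and T :: nat
  assumes graph: "simple_graph V E"
    and subset: "C \<subseteq> V"
    and filled_at_T: "filled_at V E C T = V"
begin

lemma finite_V: "finite V"
  using graph by (rule simple_graph_finite)

lemma filled_at_subset_V: "filled_at V E C t \<subseteq> V"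
  using subset by (rule filled_at_subset)

lemma filled_at_pred_subset: "filled_at V E C (t - 1) \<subseteq> filled_at V E C t"
  by (rule filled_at_mono) simp

lemma zero_forcing_set: "zero_forcing_set V E C"
  using subset filled_at_T by (rule zero_forcing_setI)

lemma propagation_time_le_T: "propagation_time V E C \<le> T"
  using filled_at_T by (rule propagation_time_le)

definition forcer :: "nat \<Rightarrow> 'a \<Rightarrow> 'a" where
  "forcer t v = (SOME u. u \<in> filled_at V E C (t - 1) \<and> nbhd V E u - filled_at V E C (t - 1) = {v})"

lemma forcer_forces:
  assumes "0 < t" and "v \<in> filled_at V E C t - filled_at V E C (t - 1)"
  shows "forcer t v \<in> filled_at V E C (t - 1)"
    and "nbhd V E (forcer t v) - filled_at V E C (t - 1) = {v}"
proof -
  have "filled_at V E C t = force_step V E (filled_at V E C (t - 1))"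
    using assms(1) filled_at_Suc[of V E C "t - 1"] by simp
  then have "\<exists>u. u \<in> filled_at V E C (t - 1) \<and> nbhd V E u - filled_at V E C (t - 1) = {v}"
    using assms(2) by (auto simp: force_step_def)
  then show "forcer t v \<in> filled_at V E C (t - 1)"
    and "nbhd V E (forcer t v) - filled_at V E C (t - 1) = {v}"
    unfolding forcer_def by (metis (mono_tags, lifting) someI_ex)+
qed

lemma forcer_in_nbhd:
  assumes "0 < t" and "v \<in> filled_at V E C t - filled_at V E C (t - 1)"
  shows "forcer t v \<in> nbhd V E v"
proof -
  have "E (forcer t v) v"
    using forcer_forces(2)[OF assms] mem_nbhd_iff[OF graph] by blast
  then have "E v (forcer t v)"
    using graph by (simp add: simple_graph_def)
  then show ?thesis
    using mem_nbhd_iff[OF graph] by blast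
qed

definition sched_x :: "'a \<Rightarrow> nat \<Rightarrow> real" where
  "sched_x v t = of_bool (v \<in> filled_at V E C t)"

definition sched_y :: "'a \<times> 'a \<Rightarrow> nat \<Rightarrow> real" where
  "sched_y a t = of_bool (0 < t \<and> snd a \<in> filled_at V E C t - filled_at V E C (t - 1)
                            \<and> fst a = forcer t (snd a))"

definition sched_z :: "nat \<Rightarrow> real" where
  "sched_z t = of_bool (filled_at V E C t \<noteq> filled_at V E C (t - 1))"

lemma sched_inflow:
  assumes "0 < t"
  shows "(\<Sum>u\<in>nbhd V E v. sched_y (u, v) t)
    = of_bool (v \<in> filled_at V E C t - filled_at V E C (t - 1))"
proof (cases "v \<in> filled_at V E C t - filled_at V E C (t - 1)")
  case True
  then have "(\<Sum>u\<in>nbhd V E v. sched_y (u, v) t) = (\<Sum>u\<in>nbhd V E v. of_bool (u = forcer t v))"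
    using assms by (intro sum.cong) (auto simp: sched_y_def)
  also have "\<dots> = 1"
    using forcer_in_nbhd[OF assms True] finite_nbhd[OF finite_V] by simp
  finally show ?thesis
    using True by simp
next
  case False
  then have "sched_y (u, v) t = 0" for u
    by (simp add: sched_y_def)
  then show ?thesis
    using False by simp
qed

lemma sched_x_step:
  "0 < t \<Longrightarrow> sched_x v t = sched_x v (t - 1) + (\<Sum>u\<in>nbhd V E v. sched_y (u, v) t)"
  using filled_at_pred_subset[of t] by (auto simp: sched_inflow sched_x_def)

lemma sched_x_telescope:
  "sched_x v 0 + (\<Sum>s\<in>{1..t}. \<Sum>u\<in>nbhd V E v. sched_y (u, v) s) = sched_x v t"
proof (induction t)
  case (Suc t)
  then show ?case
    using sched_x_step[of "Suc t" v] by simp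
qed simp

lemma sched_x_increase:
  "(\<Sum>v\<in>V. sched_x v t - sched_x v (t - 1))
     = real (card (filled_at V E C t - filled_at V E C (t - 1)))"
proof -
  have "(\<Sum>v\<in>V. sched_x v t - sched_x v (t - 1))
      = (\<Sum>v\<in>V. of_bool (v \<in> filled_at V E C t - filled_at V E C (t - 1)))"
    using filled_at_pred_subset[of t] by (intro sum.cong) (auto simp: sched_x_def)
  also have "\<dots> = real (card (V \<inter> {v. v \<in> filled_at V E C t - filled_at V E C (t - 1)}))"
    using finite_V by simp
  also have "V \<inter> {v. v \<in> filled_at V E C t - filled_at V E C (t - 1)}
      = filled_at V E C t - filled_at V E C (t - 1)"
    using filled_at_subset_V[of t] by blast
  finally show ?thesis .
qed

text \<open>Equality in constraint (5) holds exactly when u forces v in round t; otherwise its left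
  side is at most d(u) - 1.\<close>
lemma sched_color_change:
  assumes Euv: "E u v" and t: "0 < t"
  shows "sched_x u (t - 1) - sched_x v (t - 1) + (\<Sum>w\<in>nbhd V E u - {v}. sched_x w (t - 1))
    \<le> (\<Sum>w\<in>nbhd V E v. sched_y (w, v) t) + real (deg V E u) - 1"
proof -
  let ?P = "filled_at V E C (t - 1)"
  define A where "A = nbhd V E u - {v}"
  have vN: "v \<in> nbhd V E u"
    using Euv mem_nbhd_iff[OF graph] by blast
  have finA: "finite A"
    unfolding A_def using finite_nbhd[OF finite_V] by simp
  have deg: "real (deg V E u) = real (card A) + 1"
    unfolding A_def using deg_eq_Suc_card_nbhd_Diff[OF finite_V vN] by simp
  have sumA: "(\<Sum>w\<in>A. sched_x w (t - 1)) = real (card (A \<inter> ?P))"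
    unfolding sched_x_def using finA by (simp add: Int_def)
  have "sched_x u (t - 1) - sched_x v (t - 1) + (\<Sum>w\<in>A. sched_x w (t - 1))
    \<le> (\<Sum>w\<in>nbhd V E v. sched_y (w, v) t) + real (deg V E u) - 1"
  proof (cases "u \<in> ?P \<and> v \<notin> ?P \<and> A \<subseteq> ?P")
    case True
    then have "nbhd V E u - ?P = {v}"
      using vN unfolding A_def by blast
    then have "v \<in> filled_at V E C t"
      using True t filled_at_Suc[of V E C "t - 1"] vN nbhd_subset[of V E u]
      by (auto simp: force_step_def)
    then have "(\<Sum>w\<in>nbhd V E v. sched_y (w, v) t) = 1"
      using sched_inflow[OF t] True by simp
    moreover have "A \<inter> ?P = A"
      using True by blast
    ultimately show ?thesis
      using True sumA deg unfolding sched_x_def by simp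
  next
    case not_forcing: False
    have "of_bool (u \<in> ?P) - of_bool (v \<in> ?P) + real (card (A \<inter> ?P)) \<le> real (card A)"
    proof (cases "A \<subseteq> ?P")
      case True
      then have "card (A \<inter> ?P) = card A"
        by (simp add: Int_absorb2)
      then show ?thesis
        using not_forcing True by auto
    next
      case False
      then have "A \<inter> ?P \<subset> A"
        by blast
      then have "card (A \<inter> ?P) < card A"
        using finA by (simp add: psubset_card_mono)
      then show ?thesis
        by simp
    qed
    moreover have "0 \<le> (\<Sum>w\<in>nbhd V E v. sched_y (w, v) t)"
      by (simp add: sum_nonneg sched_y_def)
    ultimately show ?thesis
      using sumA deg unfolding sched_x_def by simp
  qed
  then show ?thesis
    unfolding A_def .
qed

lemma sched_feasible: "tsm_feasible V E T sched_x sched_y sched_z"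
  unfolding tsm_feasible_def
proof (intro conjI ballI allI impI)
  fix v assume "v \<in> V"
  then show "sched_x v 0 + (\<Sum>t\<in>{1..T}. \<Sum>u\<in>nbhd V E v. sched_y (u, v) t) = 1"
    using sched_x_telescope[of v T] filled_at_T by (simp add: sched_x_def)
next
  fix u v t assume "t \<in> {1..T}"
  then show "sched_y (u, v) t \<le> sched_x u (t - 1)"
    using forcer_forces(1)[of t v] by (auto simp: sched_y_def sched_x_def)
next
  fix u v w t assume "w \<in> nbhd V E u - {v}" and "t \<in> {1..T}"
  then show "sched_y (u, v) t \<le> sched_x w (t - 1)"
    using forcer_forces(2)[of t v] by (auto simp: sched_y_def sched_x_def)
next
  fix v t assume "t \<in> {1..T}"
  then show "sched_x v t = sched_x v (t - 1) + (\<Sum>u\<in>nbhd V E v. sched_y (u, v) t)"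
    by (simp add: sched_x_step)
next
  fix u v t assume "E u v" and "t \<in> {1..T}"
  then show "sched_x u (t - 1) - sched_x v (t - 1) + (\<Sum>w\<in>nbhd V E u - {v}. sched_x w (t - 1))
    \<le> (\<Sum>w\<in>nbhd V E v. sched_y (w, v) t) + real (deg V E u) - 1"
    by (intro sched_color_change) auto
next
  fix t assume "t \<in> {1..T}"
  have "card (filled_at V E C t - filled_at V E C (t - 1)) \<le> card V"
    using filled_at_subset_V[of t] finite_V by (meson Diff_subset card_mono order_trans)
  moreover have "filled_at V E C t \<noteq> filled_at V E C (t - 1)
      \<longleftrightarrow> 0 < card (filled_at V E C t - filled_at V E C (t - 1))"
    using filled_at_pred_subset[of t] filled_at_subset_V[of t] finite_V
    by (metis Diff_eq_empty_iff card_gt_0_iff finite_Diff finite_subset subset_antisym)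
  ultimately show "1 / real (card V) * (\<Sum>v\<in>V. sched_x v t - sched_x v (t - 1)) - sched_z t \<le> 0"
    and "sched_z t - (\<Sum>v\<in>V. sched_x v t - sched_x v (t - 1)) \<le> 0"
    unfolding sched_x_increase sched_z_def by (auto simp: divide_simps)
qed (simp_all add: sched_x_def sched_y_def sched_z_def)

lemma sched_objective:
  "tsm_objective V T sched_x sched_z
     = real (card C) + 1 / (2 * real T) * real (propagation_time V E C)"
proof -
  have "(\<Sum>v\<in>V. sched_x v 0) = real (card C)"
    using finite_V subset by (simp add: sched_x_def Int_absorb1)
  moreover have "(\<Sum>t\<in>{1..T}. sched_z t) = real (propagation_time V E C)"
    using card_changes_eq_propagation_time[OF zero_forcing_set propagation_time_le_T]
    by (simp add: sched_z_def Int_def)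
  ultimately show ?thesis
    by (simp add: tsm_objective_def)
qed

end

lemma tsm_feasible_of_zero_forcing_set:
  assumes "simple_graph V E" and "zero_forcing_set V E C" and "propagation_time V E C \<le> T"
  obtains x y z where "tsm_feasible V E T x y z"
    and "tsm_objective V T x z = real (card C) + 1 / (2 * real T) * real (propagation_time V E C)"
proof -
  have "filled_at V E C T = V"
    using filled_at_eq_top_mono[OF filled_at_propagation_time[OF assms(2)] assms(3)] .
  then interpret forcing_schedule V E C T
    using assms(1,2) by unfold_locales (simp_all add: zero_forcing_set_def)
  show ?thesis
    using that sched_feasible sched_objective by blast
qed

section \<open>Optimal solutions\<close>

lemma lex_objective_le:
  fixes a b p q T :: nat
  assumes "p \<le> T" and "q \<le> T"
    and le: "real a + 1 / (2 * real T) * real p \<le> real b + 1 / (2 * real T) * real q"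
  shows "a \<le> b" and "a = b \<Longrightarrow> p \<le> q"
proof -
  have bounds: "0 \<le> 1 / (2 * real T) * real r \<and> 1 / (2 * real T) * real r \<le> 1 / 2"
    if "r \<le> T" for r
    using that by (cases "T = 0") (simp_all add: field_simps)
  show "a \<le> b"
    using le bounds[OF assms(1)] bounds[OF assms(2)] by linarith
  show "p \<le> q" if "a = b"
  proof (cases "T = 0")
    case True
    then show ?thesis using assms(1) by simp
  next
    case False
    then show ?thesis
      using le that by (simp add: field_simps)
  qed
qed

lemma pt_graph_eqI:
  assumes "finite V" and "min_zero_forcing_set V E C"
    and "\<And>D. min_zero_forcing_set V E D \<Longrightarrow> pt_set V E C \<le> pt_set V E D"
  shows "pt_graph V E = pt_set V E C"
proof -
  have "{D. min_zero_forcing_set V E D} \<subseteq> Pow V"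
    by (auto simp: min_zero_forcing_set_def zero_forcing_set_def)
  then have "finite {D. min_zero_forcing_set V E D}"
    using assms(1) by (simp add: finite_subset)
  then show ?thesis
    unfolding pt_graph_def using assms(2,3) by (intro Min_eqI) auto
qed

context tsm_solution
begin

lemma optimal_lex_minimal:
  assumes opt: "tsm_optimal V E T x y z" and T: "T = card V - 1"
    and D: "zero_forcing_set V E D"
  shows "card (filled 0) \<le> card D"
    and "card (filled 0) = card D \<Longrightarrow> propagation_time V E (filled 0) \<le> propagation_time V E D"
proof -
  have "propagation_time V E D \<le> T"
    using propagation_time_le_card[OF D finite_V] T by simp
  then obtain x' y' z' where feasible': "tsm_feasible V E T x' y' z'" and
    obj: "tsm_objective V T x' z' = real (card D) + 1 / (2 * real T) * real (propagation_time V E D)"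
    using tsm_feasible_of_zero_forcing_set[OF graph D] by blast
  have "tsm_objective V T x z \<le> tsm_objective V T x' z'"
    using opt feasible' by (simp add: tsm_optimal_def)
  then have le: "real (card (filled 0)) + 1 / (2 * real T) * real (propagation_time V E (filled 0))
      \<le> real (card D) + 1 / (2 * real T) * real (propagation_time V E D)"
    unfolding objective_eq obj .
  show "card (filled 0) \<le> card D"
    and "card (filled 0) = card D \<Longrightarrow> propagation_time V E (filled 0) \<le> propagation_time V E D"
    using lex_objective_le[OF propagation_time_le_T \<open>propagation_time V E D \<le> T\<close> le] by simp_all
qed

end

theorem corollary4p5:
  fixes V :: "'a set" and E :: "'a \<Rightarrow> 'a \<Rightarrow> bool"
    and x :: "'a \<Rightarrow> nat \<Rightarrow> real" and y :: "'a \<times> 'a \<Rightarrow> nat \<Rightarrow> real" and z :: "nat \<Rightarrow> real"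
  assumes "simple_graph V E"
    and "T = card V - 1"
    and "tsm_optimal V E T x y z"
  shows "min_zero_forcing_set V E {v \<in> V. x v 0 = 1} \<and>
         pt_graph V E = pt_set V E {v \<in> V. x v 0 = 1} \<and>
         pt_set V E {v \<in> V. x v 0 = 1} = enat (nat \<lfloor>\<Sum>t\<in>{1..T}. z t\<rfloor>) \<and>
         (\<Sum>t\<in>{1..T}. z t) = real (nat \<lfloor>\<Sum>t\<in>{1..T}. z t\<rfloor>)"
proof -
  interpret tsm_solution V E T x y z
    using assms(1,3) by unfold_locales (simp_all add: tsm_optimal_def)
  note lex = optimal_lex_minimal[OF assms(3,2)]
  have C: "{v \<in> V. x v 0 = 1} = filled 0"
    by (simp add: filled_def)
  have min: "min_zero_forcing_set V E (filled 0)"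
    unfolding min_zero_forcing_set_def using zero_forcing_set_filled_0 lex(1) by blast
  have "pt_graph V E = pt_set V E (filled 0)"
  proof (rule pt_graph_eqI[OF finite_V min])
    fix D assume "min_zero_forcing_set V E D"
    then have "zero_forcing_set V E D" and "card D = card (filled 0)"
      using min lex(1) unfolding min_zero_forcing_set_def by (auto intro: antisym)
    then show "pt_set V E (filled 0) \<le> pt_set V E D"
      using lex(2) zero_forcing_set_filled_0 by (simp add: pt_set_eq_propagation_time)
  qed
  then show ?thesis
    unfolding C using min sum_z zero_forcing_set_filled_0 by (simp add: pt_set_eq_propagation_time)
qed

end
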